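(* For $n\ge1$, the number of distinct Segre symbols $\tilde\sigma_A$ of elements $A\in O(n+1)$ equals $$s(n)=\sum_{j=0}^{[(n+1)/2]} p(j)\Big(\Big[\tfrac{n+1}{2}\Big]-j+1\Big),$$ where $p(k)$ is the number of partitions of $k$ ($p(0)=1$) and $[x]$ is the integer part.
   Context: Segre symbol of an orthogonal map $A$: $\tilde\sigma_A$ consists of (a) the multiset of $\dim_{\mathbb C}\ker(A-\lambda)$ over the distinct conjugate pairs $\{\lambda,\bar\lambda\}$ of non-real eigenvalues of $A$, and (b) the multiset of $\dim\ker(A-\varepsilon)$ over those $\varepsilon\in\{1,-1\}$ which are eigenvalues of $A$ (which of $\pm1$ gives which number is not recorded). *)

theory Defs
  imports Complex_Main "HOL-Library.Multiset" "Jordan_Normal_Form.Matrix_Kernel" "Jordan_Normal_Form.Char_Poly"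
begin

definition orth_group :: "nat \<Rightarrow> real mat set" where
  "orth_group m = {A. A \<in> carrier_mat m m \<and> A * transpose_mat A = 1\<^sub>m m \<and> transpose_mat A * A = 1\<^sub>m m}"

definition eig_kernel_dim :: "'a::field mat \<Rightarrow> 'a \<Rightarrow> nat" where
  "eig_kernel_dim A l = kernel_dim (A - l \<cdot>\<^sub>m 1\<^sub>m (dim_row A))"

definition cmat :: "real mat \<Rightarrow> complex mat" where
  "cmat A = map_mat complex_of_real A"

definition conj_pairs :: "real mat \<Rightarrow> complex set set" where
  "conj_pairs A = {{l, cnj l} | l. eigenvalue (cmat A) l \<and> Im l \<noteq> 0}"

text \<open>Segre symbol: (a) multiset of complex dimensions dim_C ker(A - l) over the distinct
  conjugate pairs {l, cnj l} of non-real eigenvalues; (b) multiset of dim ker(A - e) over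
  e in {1,-1} which are eigenvalues.\<close>
definition segre_symbol :: "real mat \<Rightarrow> nat multiset \<times> nat multiset" where
  "segre_symbol A =
    (image_mset (\<lambda>P. eig_kernel_dim (cmat A) (SOME l. l \<in> P)) (mset_set (conj_pairs A)),
     image_mset (\<lambda>e. eig_kernel_dim A e) (mset_set {e \<in> {1, -1}. eigenvalue A e}))"

definition partition_number :: "nat \<Rightarrow> nat" where
  "partition_number k = card {M :: nat multiset. 0 \<notin># M \<and> sum_mset M = k}"

definition s_count :: "nat \<Rightarrow> nat" where
  "s_count n = (\<Sum>j = 0..(n + 1) div 2. partition_number j * ((n + 1) div 2 - j + 1))"

end

theory Submission
  imports Defs "Jordan_Normal_Form.Jordan_Normal_Form_Existence" "Jordan_Normal_Form.Jordan_Normal_Form_Uniqueness"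
begin

(* Over the complex numbers an orthogonal A in O(m) is unitary.  Its eigenvalues lie on the unit
   circle and ker (A - l)^2 = ker (A - l), so A is diagonalizable: the Jordan normal form of the
   complexification consists of 1x1 blocks, with an eigenvalue multiset D of size m that is
   invariant under conjugation.  The Segre symbol of A only depends on D: it is the pair
   (pair_symbol D, sign_symbol D) of the multiplicities of the conjugate pairs and of 1, -1. *)

section \<open>Kernel dimension is preserved by field homomorphisms\<close>

lemma kernel_dim_cong:
  assumes "mat_kernel A = mat_kernel B" "dim_col A = dim_col B"
  shows "kernel_dim A = kernel_dim B"
  unfolding kernel_dim_def using assms by simp

context field_hom
begin

lemma pivot_fun_hom:
  assumes "pivot_fun B f nc" "dim_col B = nc"
  shows "pivot_fun (mat\<^sub>h B) f nc"
proof -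
  note p = pivot_funD[OF refl assms(1)]
  show ?thesis
  proof (rule pivot_funI[of _ "dim_row B"])
    fix i j assume i: "i < dim_row B" and j: "j < f i"
    from p(1)[OF i] j assms(2) have "j < dim_col B" by simp
    then show "mat\<^sub>h B $$ (i,j) = 0" using p(2)[OF i j] i by simp
  next
    fix i assume i: "i < dim_row B" and f: "f i < nc"
    then show "mat\<^sub>h B $$ (i,f i) = 1" using p(4)[OF i f] assms(2) by simp
  next
    fix i i' assume i: "i < dim_row B" and f: "f i < nc" and "i' < dim_row B" "i' \<noteq> i"
    then show "mat\<^sub>h B $$ (i',f i) = 0" using p(5)[OF i f] assms(2) by simp
  qed (insert p(1,3), auto)
qed

lemma row_hom_nonzero:
  assumes B: "B \<in> carrier_mat nr nc" and i: "i < nr"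
  shows "row (mat\<^sub>h B) i \<noteq> 0\<^sub>v nc \<longleftrightarrow> row B i \<noteq> 0\<^sub>v nc"
  using B i by (auto simp: vec_eq_iff)

text \<open>The kernel dimension is read off a row echelon form obtained by Gauss--Jordan
  elimination; both the elimination and the count of nonzero rows commute with the homomorphism.\<close>

lemma kernel_dim_hom:
  assumes A: "A \<in> carrier_mat nr nc"
  shows "kernel_dim (mat\<^sub>h A) = kernel_dim A"
proof -
  define B where "B = gauss_jordan_single A"
  note g = gauss_jordan_single[OF A B_def[symmetric]]
  from g(4) obtain P Q where BPA: "B = P * A" and P: "P \<in> carrier_mat nr nr"
    and Q: "Q \<in> carrier_mat nr nr" and QP: "Q * P = 1\<^sub>m nr" by auto
  have B: "B \<in> carrier_mat nr nc" by (rule g(2))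
  from g(3) obtain f where piv: "pivot_fun B f nc" unfolding row_echelon_form_def using B by auto
  have hA: "mat\<^sub>h A \<in> carrier_mat nr nc" and hB: "mat\<^sub>h B \<in> carrier_mat nr nc"
    and hP: "mat\<^sub>h P \<in> carrier_mat nr nr" and hQ: "mat\<^sub>h Q \<in> carrier_mat nr nr"
    using A B P Q by auto
  have hBPA: "mat\<^sub>h B = mat\<^sub>h P * mat\<^sub>h A" unfolding BPA by (rule mat_hom_mult[OF P A])
  have hQP: "mat\<^sub>h Q * mat\<^sub>h P = 1\<^sub>m nr" using mat_hom_mult[OF Q P] QP by (simp add: mat_hom_one)
  have ref: "row_echelon_form (mat\<^sub>h B)"
    unfolding row_echelon_form_def using pivot_fun_hom[OF piv] B by auto
  have "kernel_dim (mat\<^sub>h A) = kernel_dim (mat\<^sub>h B)"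
    unfolding hBPA using mat_kernel_mult_eq[OF hA hP hQ hQP] hA hP
    by (intro kernel_dim_cong, auto)
  also have "\<dots> = nc - card {i. i < nr \<and> row (mat\<^sub>h B) i \<noteq> 0\<^sub>v nc}"
    using find_base_vectors(6)[OF ref hB] hB unfolding kernel_dim_def by simp
  also have "{i. i < nr \<and> row (mat\<^sub>h B) i \<noteq> 0\<^sub>v nc} = {i. i < nr \<and> row B i \<noteq> 0\<^sub>v nc}"
    using row_hom_nonzero[OF B] by auto
  also have "nc - card \<dots> = kernel_dim B"
    using find_base_vectors(6)[OF g(3) B] B unfolding kernel_dim_def by simp
  also have "\<dots> = kernel_dim A"
    unfolding BPA using mat_kernel_mult_eq[OF A P Q QP] A P
    by (intro kernel_dim_cong, auto)
  finally show ?thesis .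
qed

end

text \<open>Complex conjugation is a field automorphism; it relates the eigenspaces of l and cnj l.\<close>

interpretation cnj_field_hom: field_hom cnj
  by (unfold_locales, auto)

section \<open>Complexified orthogonal matrices are unitary\<close>

lemma cmat_carrier [simp]: "A \<in> carrier_mat n m \<Longrightarrow> cmat A \<in> carrier_mat n m"
  unfolding cmat_def by simp

lemma cmat_dims [simp]: "dim_row (cmat A) = dim_row A" "dim_col (cmat A) = dim_col A"
  unfolding cmat_def by auto

lemma cmat_mult:
  "A \<in> carrier_mat n k \<Longrightarrow> B \<in> carrier_mat k m \<Longrightarrow> cmat (A * B) = cmat A * cmat B"
  unfolding cmat_def by (rule of_real_hom.mat_hom_mult)

lemma cmat_transpose: "cmat (transpose_mat A) = transpose_mat (cmat A)"
  unfolding cmat_def by (simp add: map_mat_transpose)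

lemma cmat_one: "cmat (1\<^sub>m n) = 1\<^sub>m n"
  unfolding cmat_def by (rule of_real_hom.mat_hom_one)

lemma orth_carrier: "A \<in> orth_group m \<Longrightarrow> A \<in> carrier_mat m m"
  unfolding orth_group_def by auto

lemma orth_cmat_unitary:
  assumes "A \<in> orth_group m"
  shows "transpose_mat (cmat A) * cmat A = 1\<^sub>m m"
proof -
  have A: "A \<in> carrier_mat m m" and At: "transpose_mat A \<in> carrier_mat m m"
    using orth_carrier[OF assms] by auto
  from assms have "transpose_mat A * A = 1\<^sub>m m" unfolding orth_group_def by auto
  then show ?thesis using cmat_mult[OF At A] by (simp add: cmat_transpose cmat_one)
qed

lemma cmat_mult_conjugate:
  assumes A: "A \<in> carrier_mat nr nc" and x: "x \<in> carrier_vec nc"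
  shows "cmat A *\<^sub>v conjugate x = conjugate (cmat A *\<^sub>v x)"
proof (rule eq_vecI)
  fix i assume "i < dim_vec (conjugate (cmat A *\<^sub>v x))"
  with A x show "(cmat A *\<^sub>v conjugate x) $ i = conjugate (cmat A *\<^sub>v x) $ i"
    by (simp add: scalar_prod_def cmat_def)
qed simp

lemma orth_preserves_inner:
  assumes O: "A \<in> orth_group m" and v: "v \<in> carrier_vec m" and w: "w \<in> carrier_vec m"
  shows "(cmat A *\<^sub>v v) \<bullet>c (cmat A *\<^sub>v w) = v \<bullet>c w"
proof -
  let ?U = "cmat A"
  have A: "A \<in> carrier_mat m m" using O by (rule orth_carrier)
  have U: "?U \<in> carrier_mat m m" and Ut: "transpose_mat ?U \<in> carrier_mat m m"
    and cw: "conjugate w \<in> carrier_vec m" using A w by auto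
  have "(?U *\<^sub>v v) \<bullet>c (?U *\<^sub>v w) = (?U *\<^sub>v v) \<bullet> (?U *\<^sub>v conjugate w)"
    using cmat_mult_conjugate[OF A w] by simp
  also have "\<dots> = v \<bullet> (transpose_mat ?U *\<^sub>v (?U *\<^sub>v conjugate w))"
    using transpose_vec_mult_scalar[OF Ut, of "?U *\<^sub>v conjugate w" v] U v cw by simp
  also have "transpose_mat ?U *\<^sub>v (?U *\<^sub>v conjugate w) = (transpose_mat ?U * ?U) *\<^sub>v conjugate w"
    using Ut U cw by simp
  also have "\<dots> = conjugate w" using orth_cmat_unitary[OF O] cw by simp
  finally show ?thesis by simp
qed

lemma char_matrix_mult_vec:
  assumes U: "U \<in> carrier_mat n n" and v: "v \<in> carrier_vec n"
  shows "char_matrix U l *\<^sub>v v = U *\<^sub>v v - l \<cdot>\<^sub>v v"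
proof -
  have "char_matrix U l *\<^sub>v v = U *\<^sub>v v + (- l) \<cdot>\<^sub>v v"
    unfolding char_matrix_def by (rule eq_vecI, insert U v, auto simp: add_scalar_prod_distrib[of _ n])
  also have "\<dots> = U *\<^sub>v v - l \<cdot>\<^sub>v v"
    by (rule eq_vecI, insert U v, auto)
  finally show ?thesis .
qed

lemma orth_eigenvalue_unit:
  assumes O: "A \<in> orth_group m" and ev: "eigenvector (cmat A) v l"
  shows "cmod l = 1"
proof -
  have A: "A \<in> carrier_mat m m" using O by (rule orth_carrier)
  from ev A have v: "v \<in> carrier_vec m" "v \<noteq> 0\<^sub>v m" "cmat A *\<^sub>v v = l \<cdot>\<^sub>v v"
    unfolding eigenvector_def by auto
  have "v \<bullet>c v = (cmat A *\<^sub>v v) \<bullet>c (cmat A *\<^sub>v v)" using orth_preserves_inner[OF O v(1) v(1)] by simp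
  also have "\<dots> = (l * cnj l) * (v \<bullet>c v)"
    unfolding v(3) using v(1) by (simp add: conjugate_smult_vec)
  finally have eq: "(l * cnj l - 1) * (v \<bullet>c v) = 0" by (simp add: algebra_simps)
  have "v \<bullet>c v \<noteq> 0" using conjugate_square_eq_0_vec[OF v(1)] v(2) by simp
  with eq have "l * cnj l = 1" by simp
  then have "complex_of_real ((cmod l)^2) = 1" by (simp only: complex_norm_square)
  then have "(cmod l)^2 = 1" by (metis of_real_eq_1_iff)
  then show ?thesis using norm_ge_zero[of l] by (auto simp: power2_eq_1_iff)
qed

text \<open>For a unitary U, ker (U - l)^2 = ker (U - l): if w = (U - l) v satisfies U w = l w with
  |l| = 1, then w = U (cnj l w), so <U v, w> = <v, cnj l w> = l <v, w> and hence
  <w, w> = <U v - l v, w> = 0.\<close>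

lemma orth_kernel_square:
  assumes O: "A \<in> orth_group m" and v: "v \<in> carrier_vec m"
    and NN: "char_matrix (cmat A) l *\<^sub>v (char_matrix (cmat A) l *\<^sub>v v) = 0\<^sub>v m"
  shows "char_matrix (cmat A) l *\<^sub>v v = 0\<^sub>v m"
proof (rule ccontr)
  let ?U = "cmat A"
  define w where "w = char_matrix ?U l *\<^sub>v v"
  assume "w \<noteq> 0\<^sub>v m"
  have U: "?U \<in> carrier_mat m m" using orth_carrier[OF O] by simp
  have w: "w \<in> carrier_vec m" unfolding w_def by (rule mult_mat_vec_carrier[OF char_matrix_closed[OF U] v])
  have w_expand: "w = ?U *\<^sub>v v - l \<cdot>\<^sub>v v" unfolding w_def by (rule char_matrix_mult_vec[OF U v])
  have "eigenvector ?U w l"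
    unfolding eigenvector_char_matrix[OF U] using w \<open>w \<noteq> 0\<^sub>v m\<close> NN by (simp add: w_def)
  then have Uw: "?U *\<^sub>v w = l \<cdot>\<^sub>v w" and "cmod l = 1"
    using orth_eigenvalue_unit[OF O] unfolding eigenvector_def by auto
  then have "cnj l * l = 1" using complex_norm_square[of l] by (simp add: mult.commute)
  then have w_back: "?U *\<^sub>v (cnj l \<cdot>\<^sub>v w) = w"
    using U w Uw by (simp add: mult_mat_vec smult_smult_assoc)
  have "(?U *\<^sub>v v) \<bullet>c w = (?U *\<^sub>v v) \<bullet>c (?U *\<^sub>v (cnj l \<cdot>\<^sub>v w))" by (simp add: w_back)
  also have "\<dots> = v \<bullet>c (cnj l \<cdot>\<^sub>v w)" using orth_preserves_inner[OF O v] w by simp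
  also have "\<dots> = l * (v \<bullet>c w)" using v w by (simp add: conjugate_smult_vec)
  finally have Uvw: "(?U *\<^sub>v v) \<bullet>c w = l * (v \<bullet>c w)" .
  have "w \<bullet>c w = (?U *\<^sub>v v - l \<cdot>\<^sub>v v) \<bullet>c w" by (simp only: w_expand[symmetric])
  also have "\<dots> = (?U *\<^sub>v v) \<bullet>c w - (l \<cdot>\<^sub>v v) \<bullet>c w"
    using U v w by (simp add: minus_scalar_prod_distrib[of _ m])
  also have "\<dots> = 0" using Uvw v w by simp
  finally have "w \<bullet>c w = 0" .
  with conjugate_square_eq_0_vec[OF w] \<open>w \<noteq> 0\<^sub>v m\<close> show False by simp
qed

lemma orth_dim_gen_eigenspace:
  assumes O: "A \<in> orth_group m"
  shows "dim_gen_eigenspace (cmat A) l 2 = dim_gen_eigenspace (cmat A) l 1"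
proof -
  let ?N = "char_matrix (cmat A) l"
  have N: "?N \<in> carrier_mat m m" using orth_carrier[OF O] by simp
  have "mat_kernel (?N * ?N) = mat_kernel ?N"
  proof
    show "mat_kernel ?N \<subseteq> mat_kernel (?N * ?N)" by (rule mat_kernel_mult_subset[OF N N])
    show "mat_kernel (?N * ?N) \<subseteq> mat_kernel ?N"
    proof
      fix v assume "v \<in> mat_kernel (?N * ?N)"
      then have v: "v \<in> carrier_vec m" and "?N *\<^sub>v (?N *\<^sub>v v) = 0\<^sub>v m"
        using N by (auto simp: mat_kernel_def)
      from orth_kernel_square[OF O this] show "v \<in> mat_kernel ?N"
        using N v by (intro mat_kernelI, auto)
    qed
  qed
  then show ?thesis unfolding dim_gen_eigenspace_def
    using N by (intro kernel_dim_cong, auto simp: numeral_2_eq_2)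
qed

section \<open>Diagonalizability and the eigenvalue multiset\<close>

definition diag_spectrum :: "'a::field mat \<Rightarrow> 'a multiset \<Rightarrow> bool" where
  "diag_spectrum U D \<longleftrightarrow> (\<exists>ds. mset ds = D \<and> jordan_nf U (map (\<lambda>d. (1, d)) ds))"

lemma sum_list_mono_eq:
  assumes "sum_list (map f xs) = sum_list (map g xs)" and "\<And>x. x \<in> set xs \<Longrightarrow> g x \<le> (f x :: nat)"
  shows "\<forall>x \<in> set xs. f x = g x"
  using assms
proof (induct xs)
  case (Cons a xs)
  have "sum_list (map g xs) \<le> sum_list (map f xs)" using Cons(3) by (intro sum_list_mono, auto)
  with Cons(2) Cons(3)[of a] have "f a = g a" by simp
  with Cons show ?case by auto
qed simp

text \<open>Unitary matrices are diagonalizable: in a Jordan normal form of cmat A, a block of size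
  k >= 2 would make dim ker (U - l)^2 exceed dim ker (U - l).\<close>

lemma orth_diagonalizable:
  assumes O: "A \<in> orth_group m"
  shows "\<exists>D. diag_spectrum (cmat A) D"
proof -
  have U: "cmat A \<in> carrier_mat m m" using orth_carrier[OF O] by simp
  from char_poly_factorized[OF U] obtain as where "char_poly (cmat A) = (\<Prod>a\<leftarrow>as. [:- a, 1:])"
    by auto
  from jordan_nf_exists[OF U this] obtain n_as where jnf: "jordan_nf (cmat A) n_as" by auto
  have blocks_1: "k = 1" if ke: "(k, e) \<in> set n_as" for k e
  proof -
    let ?ks = "map fst [(n, e') \<leftarrow> n_as. e' = e]"
    have "(\<Sum>n\<leftarrow>?ks. min 2 n) = (\<Sum>n\<leftarrow>?ks. min 1 n)"
      using orth_dim_gen_eigenspace[OF O, of e] unfolding dim_gen_eigenspace[OF jnf] .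
    then have "\<forall>x \<in> set ?ks. min 2 x = min 1 x" by (rule sum_list_mono_eq) simp
    moreover have "k \<in> set ?ks" using ke by force
    moreover have "k \<noteq> 0" using jnf ke unfolding jordan_nf_def by force
    ultimately have "min 2 k = min 1 k" "k \<noteq> 0" by auto
    then show "k = 1" by (simp add: min_def split: if_splits)
  qed
  have "n_as = map (\<lambda>d. (1, d)) (map snd n_as)"
    using blocks_1 by (induct n_as) auto
  with jnf show ?thesis unfolding diag_spectrum_def by metis
qed

lemma diag_spectrum_char_poly:
  assumes "diag_spectrum U D"
  shows "char_poly U = (\<Prod>d\<in>#D. [:-d, 1:])"
proof -
  from assms obtain ds where D: "D = mset ds" and jnf: "jordan_nf U (map (\<lambda>d. (1, d)) ds)"
    unfolding diag_spectrum_def by auto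
  have "char_poly U = (\<Prod>(n, a)\<leftarrow>map (\<lambda>d. (1::nat, d)) ds. [:- a, 1:] ^ n)"
    by (rule jordan_nf_char_poly[OF jnf])
  also have "\<dots> = (\<Prod>d\<in>#D. [:-d, 1:])" unfolding D by (induct ds) auto
  finally show ?thesis .
qed

lemma diag_spectrum_size:
  assumes "U \<in> carrier_mat n n" "diag_spectrum U D"
  shows "size D = n"
proof -
  from assms(2) obtain ds where D: "D = mset ds" unfolding diag_spectrum_def by auto
  have "(\<Prod>d\<in>#D. [:-d, 1:]) = (\<Prod>d\<leftarrow>ds. [:-d, 1:])" unfolding D by (induct ds) auto
  then show ?thesis using degree_monic_char_poly[OF assms(1)] diag_spectrum_char_poly[OF assms(2)]
      degree_linear_factors[of uminus ds] D by simp
qed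

lemma diag_spectrum_eigenvalue:
  assumes "U \<in> carrier_mat n n" "diag_spectrum U D"
  shows "eigenvalue U l \<longleftrightarrow> l \<in># D"
proof -
  have "poly (\<Prod>d\<in>#D. [:-d, 1:]) l = 0 \<longleftrightarrow> l \<in># D"
    by (induct D) auto
  then show ?thesis
    unfolding eigenvalue_root_char_poly[OF assms(1)] diag_spectrum_char_poly[OF assms(2)] .
qed

lemma diag_spectrum_kernel_dim:
  assumes U: "U \<in> carrier_mat n n" and D: "diag_spectrum U D"
  shows "eig_kernel_dim U l = count D l"
proof -
  from D obtain ds where D: "D = mset ds" and jnf: "jordan_nf U (map (\<lambda>d. (1, d)) ds)"
    unfolding diag_spectrum_def by auto
  have "U - l \<cdot>\<^sub>m 1\<^sub>m (dim_row U) = char_matrix U l ^\<^sub>m 1"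
    unfolding char_matrix_def using U by (intro eq_matI, auto)
  then have "eig_kernel_dim U l = dim_gen_eigenspace U l 1"
    unfolding eig_kernel_dim_def dim_gen_eigenspace_def by simp
  also have "\<dots> = (\<Sum>n\<leftarrow>map fst [(n, e)\<leftarrow>map (\<lambda>d. (1::nat, d)) ds. e = l]. min 1 n)"
    by (rule dim_gen_eigenspace[OF jnf])
  also have "\<dots> = count D l" unfolding D by (induct ds) auto
  finally show ?thesis .
qed

definition conj_pair_set :: "complex multiset \<Rightarrow> complex set set" where
  "conj_pair_set D = {{l, cnj l} | l. l \<in># D \<and> Im l \<noteq> 0}"

definition unit_real_set :: "complex multiset \<Rightarrow> real set" where
  "unit_real_set D = {e \<in> {1, -1}. complex_of_real e \<in># D}"

definition pair_symbol :: "complex multiset \<Rightarrow> nat multiset" where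
  "pair_symbol D = image_mset (\<lambda>P. count D (SOME l. l \<in> P)) (mset_set (conj_pair_set D))"

definition sign_symbol :: "complex multiset \<Rightarrow> nat multiset" where
  "sign_symbol D = image_mset (\<lambda>e. count D (complex_of_real e)) (mset_set (unit_real_set D))"

definition conj_symmetric :: "complex multiset \<Rightarrow> bool" where
  "conj_symmetric D \<longleftrightarrow> (\<forall>l. count D (cnj l) = count D l)"

lemma eigenvalue_cmat:
  assumes A: "A \<in> carrier_mat n n"
  shows "eigenvalue (cmat A) (complex_of_real e) \<longleftrightarrow> eigenvalue A e"
proof -
  have "char_poly (cmat A) = map_poly complex_of_real (char_poly A)"
    unfolding cmat_def by (rule of_real_hom.char_poly_hom[OF A])
  then show ?thesis
    using eigenvalue_root_char_poly[OF A] eigenvalue_root_char_poly[OF cmat_carrier[OF A]] by simp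
qed

lemma eig_kernel_dim_cmat:
  assumes A: "A \<in> carrier_mat n n"
  shows "eig_kernel_dim (cmat A) (complex_of_real e) = eig_kernel_dim A e"
proof -
  have C: "A - e \<cdot>\<^sub>m 1\<^sub>m n \<in> carrier_mat n n" using A by auto
  have "cmat A - complex_of_real e \<cdot>\<^sub>m 1\<^sub>m n = cmat (A - e \<cdot>\<^sub>m 1\<^sub>m n)"
    unfolding cmat_def using A by (intro eq_matI, auto)
  then have "eig_kernel_dim (cmat A) (complex_of_real e) = kernel_dim (cmat (A - e \<cdot>\<^sub>m 1\<^sub>m n))"
    unfolding eig_kernel_dim_def using A by simp
  also have "\<dots> = eig_kernel_dim A e"
    unfolding cmat_def eig_kernel_dim_def using of_real_hom.kernel_dim_hom[OF C] A by simp
  finally show ?thesis .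
qed

text \<open>Complex conjugation maps ker (A - l) onto ker (A - cnj l) for real A.\<close>

lemma eig_kernel_dim_cnj:
  assumes A: "A \<in> carrier_mat n n"
  shows "eig_kernel_dim (cmat A) (cnj l) = eig_kernel_dim (cmat A) l"
proof -
  have "map_mat cnj (cmat A - l \<cdot>\<^sub>m 1\<^sub>m n) = cmat A - cnj l \<cdot>\<^sub>m 1\<^sub>m n"
    using A unfolding cmat_def by (intro eq_matI, auto)
  moreover have "cmat A - l \<cdot>\<^sub>m 1\<^sub>m n \<in> carrier_mat n n" using A by auto
  ultimately show ?thesis unfolding eig_kernel_dim_def
    using cnj_field_hom.kernel_dim_hom[of "cmat A - l \<cdot>\<^sub>m 1\<^sub>m n" n n] A by simp
qed

lemma segre_symbol_diag_spectrum:
  assumes A: "A \<in> carrier_mat n n" and D: "diag_spectrum (cmat A) D"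
  shows "segre_symbol A = (pair_symbol D, sign_symbol D)"
proof -
  note ev = diag_spectrum_eigenvalue[OF cmat_carrier[OF A] D]
  note kd = diag_spectrum_kernel_dim[OF cmat_carrier[OF A] D]
  have "conj_pairs A = conj_pair_set D" unfolding conj_pairs_def conj_pair_set_def ev ..
  moreover have "{e \<in> {1, -1}. eigenvalue A e} = unit_real_set D"
    unfolding unit_real_set_def eigenvalue_cmat[OF A, symmetric] ev ..
  ultimately show ?thesis
    unfolding segre_symbol_def pair_symbol_def sign_symbol_def eig_kernel_dim_cmat[OF A, symmetric] kd
    by simp
qed

lemma diag_spectrum_conj_symmetric:
  assumes A: "A \<in> carrier_mat n n" and D: "diag_spectrum (cmat A) D"
  shows "conj_symmetric D"
  using eig_kernel_dim_cnj[OF A] unfolding conj_symmetric_def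
    diag_spectrum_kernel_dim[OF cmat_carrier[OF A] D] by simp

lemma orth_spectrum_unit:
  assumes O: "A \<in> orth_group m" and D: "diag_spectrum (cmat A) D" and x: "x \<in># D"
  shows "cmod x = 1"
proof -
  from x have "eigenvalue (cmat A) x"
    using diag_spectrum_eigenvalue[OF cmat_carrier[OF orth_carrier[OF O]] D] by simp
  then obtain v where "eigenvector (cmat A) v x" unfolding eigenvalue_def by auto
  from orth_eigenvalue_unit[OF O this] show ?thesis .
qed

section \<open>Admissible symbols: the necessary conditions\<close>

text \<open>The candidate Segre symbols in dimension m: multisets a, b of positive numbers, b with at
  most two elements (one for each of the eigenvalues 1 and -1), and 2 * sum a + sum b = m.\<close>

definition admissible_symbols :: "nat \<Rightarrow> (nat multiset \<times> nat multiset) set" where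
  "admissible_symbols m =
     {(a, b). 0 \<notin># a \<and> 0 \<notin># b \<and> size b \<le> 2 \<and> 2 * sum_mset a + sum_mset b = m}"

lemma finite_conj_pair_set: "finite (conj_pair_set D)"
proof -
  have "conj_pair_set D = (\<lambda>l. {l, cnj l}) ` {l. l \<in># D \<and> Im l \<noteq> 0}"
    unfolding conj_pair_set_def by auto
  then show ?thesis by simp
qed

lemma finite_unit_real_set: "finite (unit_real_set D)"
  unfolding unit_real_set_def by auto

lemma conj_symmetric_mem:
  "conj_symmetric D \<Longrightarrow> cnj l \<in># D \<longleftrightarrow> l \<in># D"
  unfolding conj_symmetric_def by (metis count_greater_zero_iff)

lemma count_conj_pair:
  assumes "conj_symmetric D"
  shows "count D (SOME x. x \<in> {l, cnj l}) = count D l"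
proof -
  have "(SOME x. x \<in> {l, cnj l}) \<in> {l, cnj l}" by (rule someI[of _ l], simp)
  then show ?thesis using assms unfolding conj_symmetric_def by auto
qed

text \<open>Each conjugate pair contributes twice its multiplicity to the non-real eigenvalues.\<close>

lemma nonreal_mass:
  assumes c: "conj_symmetric D"
  shows "sum (count D) {x \<in> set_mset D. Im x \<noteq> 0} = 2 * sum_mset (pair_symbol D)"
proof -
  have "{x \<in> set_mset D. Im x \<noteq> 0} = \<Union> (conj_pair_set D)"
    unfolding conj_pair_set_def using conj_symmetric_mem[OF c] by auto
  then have "sum (count D) {x \<in> set_mset D. Im x \<noteq> 0} = sum (count D) (\<Union> (conj_pair_set D))"
    by simp
  also have "\<dots> = sum (sum (count D)) (conj_pair_set D)"
  proof (rule sum.Union_disjoint[unfolded comp_def])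
    show "\<forall>P\<in>conj_pair_set D. finite P" unfolding conj_pair_set_def by auto
    show "\<forall>P\<in>conj_pair_set D. \<forall>Q\<in>conj_pair_set D. P \<noteq> Q \<longrightarrow> P \<inter> Q = {}"
      unfolding conj_pair_set_def by auto
  qed
  also have "\<dots> = sum (\<lambda>P. 2 * count D (SOME l. l \<in> P)) (conj_pair_set D)"
  proof (rule sum.cong[OF refl])
    fix P assume "P \<in> conj_pair_set D"
    then obtain l where P: "P = {l, cnj l}" and "Im l \<noteq> 0" unfolding conj_pair_set_def by auto
    then have "l \<noteq> cnj l" by (auto simp: complex_eq_iff)
    then show "sum (count D) P = 2 * count D (SOME l. l \<in> P)"
      using c unfolding P count_conj_pair[OF c] conj_symmetric_def by simp
  qed
  also have "\<dots> = 2 * sum_mset (pair_symbol D)"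
    unfolding pair_symbol_def by (simp add: sum_unfold_sum_mset[symmetric] sum_distrib_left)
  finally show ?thesis .
qed

text \<open>Real eigenvalues on the unit circle are 1 and -1.\<close>

lemma real_mass:
  assumes u: "\<And>x. x \<in># D \<Longrightarrow> cmod x = 1"
  shows "sum (count D) {x \<in> set_mset D. Im x = 0} = sum_mset (sign_symbol D)"
proof -
  have "{x \<in> set_mset D. Im x = 0} = complex_of_real ` unit_real_set D"
  proof (intro equalityI subsetI)
    fix x assume x: "x \<in> {x \<in> set_mset D. Im x = 0}"
    then have "x = complex_of_real (Re x)" by (simp add: complex_eq_iff)
    moreover have "\<bar>Re x\<bar> = 1" using u[of x] x by (auto simp: cmod_def power2_eq_1_iff)
    ultimately show "x \<in> complex_of_real ` unit_real_set D"
      using x unfolding unit_real_set_def by (auto intro!: image_eqI[of x _ "Re x"])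
  qed (auto simp: unit_real_set_def)
  then show ?thesis
    unfolding sign_symbol_def sum_unfold_sum_mset[symmetric]
    by (simp add: sum.reindex inj_on_def)
qed

lemma size_symbol_mass:
  assumes "conj_symmetric D" "\<And>x. x \<in># D \<Longrightarrow> cmod x = 1"
  shows "size D = 2 * sum_mset (pair_symbol D) + sum_mset (sign_symbol D)"
proof -
  have "set_mset D = {x \<in> set_mset D. Im x \<noteq> 0} \<union> {x \<in> set_mset D. Im x = 0}" by auto
  then have "size D = sum (count D) {x \<in> set_mset D. Im x \<noteq> 0} + sum (count D) {x \<in> set_mset D. Im x = 0}"
    unfolding size_multiset_overloaded_eq by (metis (no_types, lifting) sum.union_disjoint
        finite_set_mset finite_Un disjoint_iff mem_Collect_eq)
  then show ?thesis using nonreal_mass[OF assms(1)] real_mass[OF assms(2)] by simp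
qed

lemma symbols_admissible:
  assumes c: "conj_symmetric D" and u: "\<And>x. x \<in># D \<Longrightarrow> cmod x = 1"
  shows "(pair_symbol D, sign_symbol D) \<in> admissible_symbols (size D)"
proof -
  have "0 \<notin># pair_symbol D"
    using finite_conj_pair_set count_conj_pair[OF c]
    by (auto simp: pair_symbol_def conj_pair_set_def count_eq_zero_iff)
  moreover have "0 \<notin># sign_symbol D"
    using finite_unit_real_set by (auto simp: sign_symbol_def unit_real_set_def count_eq_zero_iff)
  moreover have "card (unit_real_set D) \<le> card {1, -1 :: real}"
    by (rule card_mono) (auto simp: unit_real_set_def)
  then have "size (sign_symbol D) \<le> 2" by (simp add: sign_symbol_def)
  ultimately show ?thesis
    unfolding admissible_symbols_def using size_symbol_mass[OF c u] by simp
qed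

section \<open>Realizable eigenvalue multisets\<close>

definition realizable :: "complex multiset \<Rightarrow> bool" where
  "realizable D \<longleftrightarrow> (\<exists>A \<in> orth_group (size D). diag_spectrum (cmat A) D)"

definition block_sum :: "'a::zero mat \<Rightarrow> 'a mat \<Rightarrow> 'a mat" where
  "block_sum A B = four_block_mat A (0\<^sub>m (dim_row A) (dim_col B)) (0\<^sub>m (dim_row B) (dim_col A)) B"

lemma orth_block_sum:
  assumes oA: "A \<in> orth_group k" and oB: "B \<in> orth_group r"
  shows "block_sum A B \<in> orth_group (k + r)"
proof -
  have A: "A \<in> carrier_mat k k" and B: "B \<in> carrier_mat r r"
    and At: "transpose_mat A \<in> carrier_mat k k" and Bt: "transpose_mat B \<in> carrier_mat r r"
    using orth_carrier[OF oA] orth_carrier[OF oB] by auto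
  have A1: "A * transpose_mat A = 1\<^sub>m k" "transpose_mat A * A = 1\<^sub>m k"
    and B1: "B * transpose_mat B = 1\<^sub>m r" "transpose_mat B * B = 1\<^sub>m r"
    using oA oB unfolding orth_group_def by auto
  have z: "(0\<^sub>m k r :: real mat) \<in> carrier_mat k r" "(0\<^sub>m r k :: real mat) \<in> carrier_mat r k" by auto
  have S: "block_sum A B = four_block_mat A (0\<^sub>m k r) (0\<^sub>m r k) B"
    unfolding block_sum_def using A B by simp
  have T: "transpose_mat (block_sum A B) = four_block_mat (transpose_mat A) (0\<^sub>m k r) (0\<^sub>m r k) (transpose_mat B)"
    unfolding S using transpose_four_block_mat[OF A z B] by simp
  have "block_sum A B * transpose_mat (block_sum A B) = 1\<^sub>m (k + r)"
    unfolding T unfolding S mult_four_block_mat[OF A z B At z Bt] A1 B1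
    using A B At Bt by (simp flip: four_block_one_mat)
  moreover have "transpose_mat (block_sum A B) * block_sum A B = 1\<^sub>m (k + r)"
    unfolding T unfolding S mult_four_block_mat[OF At z Bt A z B] A1 B1
    using A B At Bt by (simp flip: four_block_one_mat)
  ultimately show ?thesis unfolding orth_group_def S using A B by auto
qed

lemma cmat_block_sum: "cmat (block_sum A B) = block_sum (cmat A) (cmat B)"
  unfolding block_sum_def cmat_def by (rule eq_matI) auto

lemma jordan_nf_block_sum:
  assumes "jordan_nf X js" "jordan_nf Y ks"
  shows "jordan_nf (block_sum X Y) (js @ ks)"
proof -
  have "diag_block_mat [X, Y] = block_sum X Y"
    using diag_block_mat_append[of "[X]" "[Y]"]
    by (simp add: block_sum_def Let_def del: diag_block_mat.simps)
  then show ?thesis using jordan_nf_diag_block_mat[of "[(X, js), (Y, ks)]"] assms by auto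
qed

text \<open>Realizable multisets are closed under sums, by taking block diagonal matrices.\<close>

lemma realizable_add:
  assumes "realizable D1" "realizable D2"
  shows "realizable (D1 + D2)"
proof -
  from assms obtain A1 A2 ds1 ds2 where
    O: "A1 \<in> orth_group (size D1)" "A2 \<in> orth_group (size D2)" and
    D: "mset ds1 = D1" "mset ds2 = D2" and
    J: "jordan_nf (cmat A1) (map (\<lambda>d. (1, d)) ds1)" "jordan_nf (cmat A2) (map (\<lambda>d. (1, d)) ds2)"
    unfolding realizable_def diag_spectrum_def by blast
  have "block_sum A1 A2 \<in> orth_group (size (D1 + D2))" using orth_block_sum[OF O] by simp
  moreover have "diag_spectrum (cmat (block_sum A1 A2)) (D1 + D2)"
    unfolding diag_spectrum_def cmat_block_sum using jordan_nf_block_sum[OF J] D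
    by (intro exI[of _ "ds1 @ ds2"]) simp
  ultimately show ?thesis unfolding realizable_def by blast
qed

lemma realizable_empty: "realizable {#}"
proof -
  have "cmat (1\<^sub>m 0) = jordan_matrix []" unfolding cmat_def jordan_matrix_def by (rule eq_matI) auto
  then have "similar_mat (cmat (1\<^sub>m 0)) (jordan_matrix [])"
    using similar_mat_refl[of "cmat (1\<^sub>m 0)" 0] by (metis cmat_carrier one_carrier_mat)
  then have "diag_spectrum (cmat (1\<^sub>m 0)) {#}"
    unfolding diag_spectrum_def jordan_nf_def by auto
  moreover have "(1\<^sub>m 0 :: real mat) \<in> orth_group 0" unfolding orth_group_def by simp
  ultimately show ?thesis unfolding realizable_def by auto
qed

lemma realizable_repeat: "realizable D \<Longrightarrow> realizable (repeat_mset k D)"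
  by (induct k) (auto intro: realizable_add realizable_empty)

definition rotation :: "real \<Rightarrow> real mat" where
  "rotation t = mat 2 2 (\<lambda>(i,j). if i = j then cos t else if i = 0 then - sin t else sin t)"

lemma less_2_cases: "(i::nat) < 2 \<longleftrightarrow> i = 0 \<or> i = 1" by auto

lemma sum_upt_2: "sum f {0..<2::nat} = f 0 + f 1" by (simp add: numeral_2_eq_2)

lemma rotation_orth: "rotation t \<in> orth_group 2"
  unfolding orth_group_def
  by (auto intro!: eq_matI simp: rotation_def less_2_cases scalar_prod_def sum_upt_2
      power2_eq_square[symmetric])

lemma rotation_diag_spectrum: "diag_spectrum (cmat (rotation t)) {#cis t, cnj (cis t)#}"
proof -
  define P :: "complex mat" where "P = mat 2 2 (\<lambda>(i,j). if i = 0 then 1 else if j = 0 then - \<i> else \<i>)"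
  define Q :: "complex mat" where "Q = mat 2 2 (\<lambda>(i,j). (if j = 0 then 1 else if i = 0 then \<i> else - \<i>) / 2)"
  let ?J = "jordan_matrix [(1, cis t), (1, cnj (cis t))]"
  have "similar_mat_wit (cmat (rotation t)) ?J P Q"
  proof (rule similar_mat_witI[of _ _ 2])
    show "P * Q = 1\<^sub>m 2" "Q * P = 1\<^sub>m 2"
      by (rule eq_matI, auto simp: P_def Q_def less_2_cases scalar_prod_def sum_upt_2 complex_eq_iff)+
    show "cmat (rotation t) = P * ?J * Q"
      by (rule eq_matI, auto simp: P_def Q_def jordan_matrix_def jordan_block_def rotation_def
          cmat_def less_2_cases scalar_prod_def sum_upt_2 complex_eq_iff)
  qed (auto simp: P_def Q_def jordan_matrix_def rotation_def cmat_def)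
  then show ?thesis unfolding diag_spectrum_def jordan_nf_def similar_mat_def
    by (intro exI[of _ "[cis t, cnj (cis t)]"]) auto
qed

lemma realizable_rotation: "realizable {#cis t, cnj (cis t)#}"
  unfolding realizable_def using rotation_orth rotation_diag_spectrum
  by (auto simp: numeral_2_eq_2)

lemma realizable_sign:
  assumes "e \<in> {1, -1 :: real}"
  shows "realizable {#complex_of_real e#}"
proof -
  let ?E = "mat 1 1 (\<lambda>_. e)"
  have "cmat ?E = jordan_matrix [(1, complex_of_real e)]"
    unfolding cmat_def jordan_matrix_def jordan_block_def by (rule eq_matI) auto
  then have "similar_mat (cmat ?E) (jordan_matrix [(1, complex_of_real e)])"
    using similar_mat_refl[of "cmat ?E" 1] by (metis cmat_carrier mat_carrier)
  then have "diag_spectrum (cmat ?E) {#complex_of_real e#}"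
    unfolding diag_spectrum_def jordan_nf_def by (intro exI[of _ "[complex_of_real e]"]) auto
  moreover have "?E \<in> orth_group 1"
    using assms unfolding orth_group_def by (auto intro!: eq_matI simp: scalar_prod_def)
  ultimately show ?thesis unfolding realizable_def by auto
qed

section \<open>Every admissible symbol is realized\<close>

lemma realizable_conj_symmetric: "realizable D \<Longrightarrow> conj_symmetric D"
  unfolding realizable_def using diag_spectrum_conj_symmetric orth_carrier by blast

lemma conj_pair_set_nonempty: "P \<in> conj_pair_set D \<Longrightarrow> P \<noteq> {}"
  unfolding conj_pair_set_def by auto

lemma conj_pair_subset: "conj_symmetric D \<Longrightarrow> P \<in> conj_pair_set D \<Longrightarrow> P \<subseteq> set_mset D"
  unfolding conj_pair_set_def using conj_symmetric_mem by auto

lemma count_add_disjoint: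
  "set_mset D1 \<inter> set_mset D2 = {} \<Longrightarrow> x \<in># D1 \<Longrightarrow> count (D1 + D2) x = count D1 x"
  by (auto simp: count_eq_zero_iff)

lemma pair_symbol_add:
  assumes c: "conj_symmetric D1" "conj_symmetric D2" and disj: "set_mset D1 \<inter> set_mset D2 = {}"
  shows "pair_symbol (D1 + D2) = pair_symbol D1 + pair_symbol D2"
proof -
  let ?f = "\<lambda>D P. count D (SOME l. l \<in> P)"
  let ?C1 = "conj_pair_set D1" and ?C2 = "conj_pair_set D2"
  have some_in: "(SOME l. l \<in> P) \<in> set_mset D" if "conj_symmetric D" "P \<in> conj_pair_set D" for D P
    using conj_pair_subset[OF that] conj_pair_set_nonempty[OF that(2)] by (auto intro: someI2_ex)
  have "P \<notin> ?C2" if "P \<in> ?C1" for P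
    using conj_pair_subset[OF c(1) that] conj_pair_subset[OF c(2)] conj_pair_set_nonempty[OF that] disj
    by auto
  then have "?C1 \<inter> ?C2 = {}" by blast
  moreover have "conj_pair_set (D1 + D2) = ?C1 \<union> ?C2" unfolding conj_pair_set_def by auto
  ultimately have "pair_symbol (D1 + D2) =
      image_mset (?f (D1 + D2)) (mset_set ?C1) + image_mset (?f (D1 + D2)) (mset_set ?C2)"
    unfolding pair_symbol_def by (simp only: mset_set_Union finite_conj_pair_set image_mset_union)
  also have "\<dots> = pair_symbol D1 + pair_symbol D2"
    unfolding pair_symbol_def
  proof (intro arg_cong2[where f = "(+)"] image_mset_cong)
    fix P assume "P \<in># mset_set ?C1"
    then show "?f (D1 + D2) P = ?f D1 P"
      using count_add_disjoint[OF disj some_in[OF c(1)]] finite_conj_pair_set by simp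
  next
    fix P assume "P \<in># mset_set ?C2"
    then show "?f (D1 + D2) P = ?f D2 P"
      using count_add_disjoint[of D2 D1, OF _ some_in[OF c(2)]] disj finite_conj_pair_set
      by (simp add: add.commute inf_commute)
  qed
  finally show ?thesis .
qed

lemma sign_symbol_add:
  assumes disj: "set_mset D1 \<inter> set_mset D2 = {}"
  shows "sign_symbol (D1 + D2) = sign_symbol D1 + sign_symbol D2"
proof -
  let ?f = "\<lambda>D e. count D (complex_of_real e)"
  let ?E1 = "unit_real_set D1" and ?E2 = "unit_real_set D2"
  have "?E1 \<inter> ?E2 = {}" using disj unfolding unit_real_set_def by auto
  moreover have "unit_real_set (D1 + D2) = ?E1 \<union> ?E2" unfolding unit_real_set_def by auto
  ultimately have "sign_symbol (D1 + D2) =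
      image_mset (?f (D1 + D2)) (mset_set ?E1) + image_mset (?f (D1 + D2)) (mset_set ?E2)"
    unfolding sign_symbol_def by (simp only: mset_set_Union finite_unit_real_set image_mset_union)
  also have "\<dots> = sign_symbol D1 + sign_symbol D2"
    unfolding sign_symbol_def
    by (intro arg_cong2[where f = "(+)"] image_mset_cong)
      (use disj finite_unit_real_set in \<open>auto simp: unit_real_set_def count_eq_zero_iff\<close>)
  finally show ?thesis .
qed

lemma realizable_disjoint_add:
  assumes "realizable D1" "realizable D2" "set_mset D1 \<inter> set_mset D2 = {}"
  shows "realizable (D1 + D2)"
    and "pair_symbol (D1 + D2) = pair_symbol D1 + pair_symbol D2"
    and "sign_symbol (D1 + D2) = sign_symbol D1 + sign_symbol D2"
  using realizable_add pair_symbol_add sign_symbol_add realizable_conj_symmetric assms by auto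

lemma symbols_empty: "pair_symbol {#} = {#}" "sign_symbol {#} = {#}"
  unfolding pair_symbol_def sign_symbol_def conj_pair_set_def unit_real_set_def by auto

lemma symbols_rotation_block:
  assumes "Im c \<noteq> 0" "k > 0"
  shows "pair_symbol (repeat_mset k {#c, cnj c#}) = {#k#}"
    and "sign_symbol (repeat_mset k {#c, cnj c#}) = {#}"
proof -
  let ?B = "repeat_mset k {#c, cnj c#}"
  have "c \<noteq> cnj c" using assms(1) by (auto simp: complex_eq_iff)
  then have count_B: "count ?B x = k" if "x \<in> {c, cnj c}" for x using that by auto
  have "conj_pair_set ?B = {{c, cnj c}}"
    unfolding conj_pair_set_def using assms by (auto simp: insert_commute)
  moreover have "(SOME l. l \<in> {c, cnj c}) \<in> {c, cnj c}" by (rule someI[of _ c]) simp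
  ultimately show "pair_symbol ?B = {#k#}" unfolding pair_symbol_def using count_B by simp
  have "complex_of_real e \<notin># ?B" for e using assms by (auto simp: complex_eq_iff)
  then show "sign_symbol ?B = {#}" unfolding sign_symbol_def unit_real_set_def by simp
qed

lemma symbols_sign_block:
  assumes "e \<in> {1, -1}" "k > 0"
  shows "pair_symbol (replicate_mset k (complex_of_real e)) = {#}"
    and "sign_symbol (replicate_mset k (complex_of_real e)) = {#k#}"
proof -
  show "pair_symbol (replicate_mset k (complex_of_real e)) = {#}"
    unfolding pair_symbol_def conj_pair_set_def by simp
  have "unit_real_set (replicate_mset k (complex_of_real e)) = {e}"
    using assms unfolding unit_real_set_def by auto
  then show "sign_symbol (replicate_mset k (complex_of_real e)) = {#k#}"
    unfolding sign_symbol_def using assms by simp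
qed

text \<open>Infinitely many angles give pairwise distinct eigenvalues, so a fresh one always exists.\<close>

lemma fresh_angle:
  assumes "finite S"
  obtains t where "0 < t" "t < pi" "cis t \<notin> S"
proof -
  have "inj_on cis {0<..<pi}"
    by (rule inj_onI) (metis cis.sel(1) cos_inj_pi greaterThanLessThan_iff less_eq_real_def)
  then have "infinite (cis ` {0<..<pi})" using infinite_Ioo[OF pi_gt_zero] finite_imageD by blast
  then obtain t where "t \<in> {0<..<pi}" "cis t \<notin> S" using assms by (metis finite_subset image_subset_iff subsetI)
  then show ?thesis using that by auto
qed

text \<open>Any multiset a of positive numbers is the pair part of a realizable multiset without real
  eigenvalues: by induction on a, adding k copies of a rotation with a fresh angle.\<close>

lemma realize_pair_symbol:
  assumes "0 \<notin># a"
  shows "\<exists>D. realizable D \<and> (\<forall>x\<in>#D. Im x \<noteq> 0) \<and> size D = 2 * sum_mset a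
             \<and> pair_symbol D = a \<and> sign_symbol D = {#}"
  using assms
proof (induct a)
  case empty
  then show ?case using realizable_empty symbols_empty by (intro exI[of _ "{#}"]) auto
next
  case (add k a)
  then obtain D where D: "realizable D" "\<forall>x\<in>#D. Im x \<noteq> 0" "size D = 2 * sum_mset a"
    "pair_symbol D = a" "sign_symbol D = {#}" and k: "k > 0" by auto
  obtain t where t: "0 < t" "t < pi" and fresh: "cis t \<notin># D"
    using fresh_angle[of "set_mset D"] by auto
  define B where "B = repeat_mset k {#cis t, cnj (cis t)#}"
  have Im: "Im (cis t) \<noteq> 0" using t sin_gt_zero[of t] by simp
  have B: "realizable B" unfolding B_def by (rule realizable_repeat[OF realizable_rotation])
  have "cnj (cis t) \<notin># D" using fresh conj_symmetric_mem[OF realizable_conj_symmetric[OF D(1)]] by blast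
  then have disj: "set_mset B \<inter> set_mset D = {}" using fresh k unfolding B_def by auto
  show ?case
  proof (intro exI[of _ "B + D"] conjI)
    show "realizable (B + D)" using realizable_disjoint_add(1)[OF B D(1) disj] .
    show "\<forall>x\<in>#B + D. Im x \<noteq> 0" using D(2) Im k unfolding B_def by auto
    show "size (B + D) = 2 * sum_mset (add_mset k a)" using D(3) unfolding B_def by simp
    show "pair_symbol (B + D) = add_mset k a" "sign_symbol (B + D) = {#}"
      using realizable_disjoint_add(2,3)[OF B D(1) disj] symbols_rotation_block[OF Im k] D(4,5)
      unfolding B_def by auto
  qed
qed

text \<open>Any multiset b of at most two positive numbers is the sign part of a realizable multiset of
  real eigenvalues: use b's elements as the multiplicities of 1 and -1.\<close>

lemma realize_sign_block:
  assumes "e \<in> {1, -1}" "k > 0"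
  defines "D \<equiv> replicate_mset k (complex_of_real e)"
  shows "realizable D \<and> (\<forall>x\<in>#D. Im x = 0) \<and> size D = k \<and> pair_symbol D = {#} \<and> sign_symbol D = {#k#}"
  using realizable_repeat[OF realizable_sign[OF assms(1)], of k] symbols_sign_block[OF assms(1,2)]
  unfolding D_def by simp

lemma size_le_2_cases:
  assumes "size M \<le> 2"
  obtains "M = {#}" | x where "M = {#x#}" | x y where "M = {#x, y#}"
proof -
  consider "size M = 0" | "size M = 1" | "size M = Suc 1" using assms by linarith
  then show ?thesis
  proof cases
    case 1
    then show ?thesis using that by simp
  next
    case 2
    then show ?thesis using that size_1_singleton_mset by blast
  next
    case 3
    then obtain x N where "M = add_mset x N" using size_eq_Suc_imp_eq_union by blast
    with 3 obtain y where "M = {#x, y#}" using size_1_singleton_mset[of N] by auto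
    then show ?thesis using that by blast
  qed
qed

lemma realize_sign_symbol:
  assumes "0 \<notin># b" "size b \<le> 2"
  shows "\<exists>D. realizable D \<and> (\<forall>x\<in>#D. Im x = 0) \<and> size D = sum_mset b
             \<and> pair_symbol D = {#} \<and> sign_symbol D = b"
proof -
  from assms(2) show ?thesis
  proof (cases rule: size_le_2_cases)
    case 1
    then show ?thesis using realizable_empty symbols_empty by (intro exI[of _ "{#}"]) auto
  next
    case (2 x)
    then show ?thesis using realize_sign_block[of 1 x] assms(1) by auto
  next
    case (3 x y)
    let ?P = "replicate_mset x (1::complex)" and ?N = "replicate_mset y (-1::complex)"
    have P: "realizable ?P" "\<forall>z\<in>#?P. Im z = 0" "size ?P = x" "pair_symbol ?P = {#}" "sign_symbol ?P = {#x#}"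
      using realize_sign_block[of 1 x] 3 assms(1) by auto
    have N: "realizable ?N" "\<forall>z\<in>#?N. Im z = 0" "size ?N = y" "pair_symbol ?N = {#}" "sign_symbol ?N = {#y#}"
      using realize_sign_block[of "-1" y] 3 assms(1) by auto
    have disj: "set_mset ?P \<inter> set_mset ?N = {}" by auto
    show ?thesis
      using realizable_disjoint_add[OF P(1) N(1) disj] P N 3 by (intro exI[of _ "?P + ?N"]) auto
  qed
qed

text \<open>The two constructions have disjoint spectra (non-real versus real), so they combine.\<close>

lemma admissible_realized:
  assumes "(a, b) \<in> admissible_symbols m"
  shows "\<exists>D. realizable D \<and> size D = m \<and> pair_symbol D = a \<and> sign_symbol D = b"
proof -
  from assms have a: "0 \<notin># a" and b: "0 \<notin># b" "size b \<le> 2"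
    and m: "2 * sum_mset a + sum_mset b = m" unfolding admissible_symbols_def by auto
  obtain Da where Da: "realizable Da" "\<forall>x\<in>#Da. Im x \<noteq> 0" "size Da = 2 * sum_mset a"
    "pair_symbol Da = a" "sign_symbol Da = {#}" using realize_pair_symbol[OF a] by blast
  obtain Db where Db: "realizable Db" "\<forall>x\<in>#Db. Im x = 0" "size Db = sum_mset b"
    "pair_symbol Db = {#}" "sign_symbol Db = b" using realize_sign_symbol[OF b] by blast
  have disj: "set_mset Da \<inter> set_mset Db = {}" using Da(2) Db(2) by blast
  show ?thesis
    using realizable_disjoint_add[OF Da(1) Db(1) disj] Da Db m by (intro exI[of _ "Da + Db"]) auto
qed

theorem segre_symbols_orth_group: "segre_symbol ` orth_group m = admissible_symbols m"
proof (intro equalityI subsetI)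
  fix s assume "s \<in> segre_symbol ` orth_group m"
  then obtain A where O: "A \<in> orth_group m" and s: "s = segre_symbol A" by auto
  have A: "A \<in> carrier_mat m m" using orth_carrier[OF O] .
  obtain D where D: "diag_spectrum (cmat A) D" using orth_diagonalizable[OF O] by blast
  have "(pair_symbol D, sign_symbol D) \<in> admissible_symbols (size D)"
    using symbols_admissible diag_spectrum_conj_symmetric[OF A D] orth_spectrum_unit[OF O D] by blast
  then show "s \<in> admissible_symbols m"
    using s segre_symbol_diag_spectrum[OF A D] diag_spectrum_size[OF cmat_carrier[OF A] D] by simp
next
  fix s assume "s \<in> admissible_symbols m"
  then obtain D where "realizable D" "size D = m" "(pair_symbol D, sign_symbol D) = s"
    using admissible_realized by (cases s) fastforce
  then show "s \<in> segre_symbol ` orth_group m"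
    unfolding realizable_def using segre_symbol_diag_spectrum orth_carrier by (metis image_eqI)
qed

section \<open>Counting admissible symbols\<close>

definition partitions :: "nat \<Rightarrow> nat multiset set" where
  "partitions j = {M. 0 \<notin># M \<and> sum_mset M = j}"

definition sign_parts :: "nat \<Rightarrow> nat multiset set" where
  "sign_parts N = {b. 0 \<notin># b \<and> size b \<le> 2 \<and> sum_mset b = N}"

text \<open>Partitions of j have at most j parts, each at most j; hence there are finitely many.\<close>

lemma member_le_sum_mset: "(x::nat) \<in># M \<Longrightarrow> x \<le> sum_mset M"
  by (metis le_add1 multi_member_split sum_mset.add_mset)

lemma size_le_sum_mset: "0 \<notin># (M :: nat multiset) \<Longrightarrow> size M \<le> sum_mset M"
proof (induct M)
  case (add x M)
  then show ?case by (cases x) auto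
qed simp

lemma finite_partitions: "finite (partitions j)"
proof -
  have "partitions j \<subseteq> mset ` {xs. set xs \<subseteq> {0..j} \<and> length xs \<le> j}"
  proof
    fix M assume M: "M \<in> partitions j"
    obtain xs where xs: "mset xs = M" using ex_mset by blast
    have "x \<le> j" if "x \<in> set xs" for x
      using M that unfolding partitions_def xs[symmetric]
      using member_le_sum_mset by auto
    moreover have "length xs \<le> j"
      using M size_le_sum_mset[of M] unfolding partitions_def xs[symmetric] by auto
    ultimately show "M \<in> mset ` {xs. set xs \<subseteq> {0..j} \<and> length xs \<le> j}" using xs by auto
  qed
  moreover have "finite {xs. set xs \<subseteq> {0..j::nat} \<and> length xs \<le> j}"
    by (rule finite_lists_length_le) simp
  ultimately show ?thesis by (meson finite_imageI finite_subset)
qed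

text \<open>A multiset in sign_parts N is determined by its smaller element i <= N div 2 (with i = 0
  for fewer than two elements).\<close>

definition two_part :: "nat \<Rightarrow> nat \<Rightarrow> nat multiset" where
  "two_part N i = (if i = 0 then (if N = 0 then {#} else {#N#}) else {#i, N - i#})"

lemma sign_parts_eq: "sign_parts N = two_part N ` {0..N div 2}"
proof (intro equalityI subsetI)
  fix b assume "b \<in> sign_parts N"
  then have b0: "0 \<notin># b" and "size b \<le> 2" and bN: "sum_mset b = N" unfolding sign_parts_def by auto
  from this(2) show "b \<in> two_part N ` {0..N div 2}"
  proof (cases rule: size_le_2_cases)
    case (3 x y)
    then have "b = two_part N (min x y)" "min x y \<in> {0..N div 2}"
      using b0 bN by (auto simp: two_part_def min_def add_mset_commute)
    then show ?thesis by blast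
  qed (use b0 bN in \<open>auto simp: two_part_def intro!: image_eqI[of _ _ 0]\<close>)
qed (auto simp: sign_parts_def two_part_def)

lemma two_part_inj: "inj_on (two_part N) {0..N div 2}"
proof (rule inj_onI)
  fix i j assume i: "i \<in> {0..N div 2}" and j: "j \<in> {0..N div 2}" and eq: "two_part N i = two_part N j"
  have "size (two_part N k) = 2 \<longleftrightarrow> k \<noteq> 0" for k by (simp add: two_part_def)
  then have "i = 0 \<longleftrightarrow> j = 0" using eq by metis
  moreover have "i = j \<or> i = N - j" if "i \<noteq> 0"
  proof -
    have "i \<in># two_part N i" using that by (simp add: two_part_def)
    then have "i \<in># two_part N j" unfolding eq .
    then show ?thesis using that \<open>i = 0 \<longleftrightarrow> j = 0\<close> by (simp add: two_part_def)
  qed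
  ultimately show "i = j" using i j by force
qed

lemma card_sign_parts: "card (sign_parts N) = N div 2 + 1"
  unfolding sign_parts_eq card_image[OF two_part_inj] by simp

lemma admissible_symbols_split:
  "admissible_symbols m = (\<Union>j \<in> {0..m div 2}. partitions j \<times> sign_parts (m - 2 * j))"
proof (intro equalityI subsetI)
  fix s assume "s \<in> admissible_symbols m"
  then obtain a b where s: "s = (a, b)" and a: "0 \<notin># a" and b: "0 \<notin># b" "size b \<le> 2"
    and m: "2 * sum_mset a + sum_mset b = m" unfolding admissible_symbols_def by auto
  have half: "x \<le> (2 * x + y) div 2" for x y :: nat by simp
  have "sum_mset a \<le> m div 2" unfolding m[symmetric] by (rule half)
  then have "sum_mset a \<in> {0..m div 2}" by simp
  moreover have "a \<in> partitions (sum_mset a)" using a unfolding partitions_def by simp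
  moreover have "b \<in> sign_parts (m - 2 * sum_mset a)" using b m unfolding sign_parts_def by auto
  ultimately show "s \<in> (\<Union>j \<in> {0..m div 2}. partitions j \<times> sign_parts (m - 2 * j))"
    unfolding s by blast
next
  fix s assume "s \<in> (\<Union>j \<in> {0..m div 2}. partitions j \<times> sign_parts (m - 2 * j))"
  then obtain j a b where "j \<le> m div 2" "s = (a, b)" "a \<in> partitions j" "b \<in> sign_parts (m - 2 * j)"
    by auto
  then show "s \<in> admissible_symbols m"
    unfolding admissible_symbols_def partitions_def sign_parts_def by auto
qed

lemma card_admissible_symbols:
  "card (admissible_symbols m) = (\<Sum>j = 0..m div 2. card (partitions j) * (m div 2 - j + 1))"
proof -
  have "card (admissible_symbols m) = (\<Sum>j = 0..m div 2. card (partitions j \<times> sign_parts (m - 2 * j)))"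
    unfolding admissible_symbols_split
  proof (rule card_UN_disjoint)
    show "\<forall>j\<in>{0..m div 2}. finite (partitions j \<times> sign_parts (m - 2 * j))"
      by (simp add: finite_partitions sign_parts_eq)
    show "\<forall>i\<in>{0..m div 2}. \<forall>j\<in>{0..m div 2}. i \<noteq> j \<longrightarrow>
        (partitions i \<times> sign_parts (m - 2 * i)) \<inter> (partitions j \<times> sign_parts (m - 2 * j)) = {}"
      unfolding partitions_def by auto
  qed simp
  also have "\<dots> = (\<Sum>j = 0..m div 2. card (partitions j) * (m div 2 - j + 1))"
    by (rule sum.cong) (auto simp: card_cartesian_product card_sign_parts)
  finally show ?thesis .
qed

theorem mainTheorem4:
  fixes n :: nat
  assumes "n \<ge> 1"
  shows "card (segre_symbol ` orth_group (n + 1)) = s_count n"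
  unfolding segre_symbols_orth_group card_admissible_symbols s_count_def
    partition_number_def partitions_def ..

end
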